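(* Let $n\ge 1$, $d\ge 1$ and $m\ge 1$ be integers, let $p\in(0,1)$ and $\delta\in(0,1)$, and let $I\subseteq[n]$ be a fixed set with $|I|\le d$. Let $M$ be a random $m\times n$ matrix whose entries are independent, each equal to $0$ with probability $p$ and to $1$ with probability $1-p$. For integers $d_1,d_2,k$ put $$P(n,d_1,d_2,k,p)=n^{d_2-k}\left(1-p^{d_2}-p^{d_1}+2p^{d_1+d_2-k}\right)^m,$$ and let $\Pi=\max P(n,d_1,d_2,k,p)$, the maximum being over all integers $d_1,d_2,k$ with $0\le d_1,d_2\le d$, $0\le k\le\min(d_1,d_2)$, excluding the triples with $d_1=d_2=k$. If $\Pi\le \delta/(d^2 2^d)$, then with probability at least $1-\delta$ the matrix $M$ is $(I,d)$-separable.
   Context: For $J\subseteq[n]$ and $a\in\{0,1\}^n$, $T(J,a)=1$ if $a_j=1$ for some $j\in J$ and $T(J,a)=0$ otherwise (so $T(\emptyset,a)=0$). For an $m\times n$ 0/1 matrix $M$ with rows $M_1,\dots,M_m$, $T(J,M)$ is the vector $(T(J,M_i))_{i=1}^m$. The matrix $M$ is called $(I,d)$-separable if for every $J\subseteq[n]$ with $|J|\le d$ and $J\ne I$ we have $T(J,M)\ne T(I,M)$. *)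

theory Defs
  imports "HOL-Probability.Probability"
begin

text \<open>A 0/1 matrix with m rows and n columns is a function (nat \<times> nat \<Rightarrow> bool);
  entry (i,j) with i \<in> {1..m}, j \<in> {1..n}; True encodes 1, False encodes 0.\<close>

definition T_row :: "nat set \<Rightarrow> (nat \<Rightarrow> bool) \<Rightarrow> bool" where
  "T_row J a = (\<exists>j\<in>J. a j)"

definition T_mat :: "nat \<Rightarrow> nat set \<Rightarrow> (nat \<times> nat \<Rightarrow> bool) \<Rightarrow> (nat \<Rightarrow> bool)" where
  "T_mat m J M = (\<lambda>i\<in>{1..m}. T_row J (\<lambda>j. M (i, j)))"

definition separable :: "nat \<Rightarrow> nat \<Rightarrow> (nat \<times> nat \<Rightarrow> bool) \<Rightarrow> nat set \<Rightarrow> nat \<Rightarrow> bool" where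
  "separable m n M I d =
     (\<forall>J. J \<subseteq> {1..n} \<and> card J \<le> d \<and> J \<noteq> I \<longrightarrow> T_mat m J M \<noteq> T_mat m I M)"

definition random_matrix :: "nat \<Rightarrow> nat \<Rightarrow> real \<Rightarrow> (nat \<times> nat \<Rightarrow> bool) pmf" where
  "random_matrix m n p = Pi_pmf ({1..m} \<times> {1..n}) False (\<lambda>_. bernoulli_pmf (1 - p))"

definition Pfun :: "nat \<Rightarrow> nat \<Rightarrow> nat \<Rightarrow> nat \<Rightarrow> nat \<Rightarrow> real \<Rightarrow> real" where
  "Pfun m n d1 d2 k p =
     real n ^ (d2 - k) * (1 - p ^ d2 - p ^ d1 + 2 * p ^ (d1 + d2 - k)) ^ m"

definition triples :: "nat \<Rightarrow> (nat \<times> nat \<times> nat) set" where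
  "triples d = {(d1, d2, k). d1 \<le> d \<and> d2 \<le> d \<and> k \<le> min d1 d2 \<and> \<not> (d1 = d2 \<and> d2 = k)}"

definition PiMax :: "nat \<Rightarrow> nat \<Rightarrow> nat \<Rightarrow> real \<Rightarrow> real" where
  "PiMax m n d p = Max ((\<lambda>(d1, d2, k). Pfun m n d1 d2 k p) ` triples d)"

end

theory Submission
  imports Defs
begin

text \<open>Separability fails exactly when T(J,M) = T(I,M) for some J \<noteq> I with |J| \<le> d, so a union
  bound over J suffices. The rows of M are independent, and a row gives the same answer for I and J
  unless exactly one of the two all-zero events happens, which has probability
  1 - p^|J| - p^|I| + 2 p^|I \<union> J|. Hence the bad event for J has probability
  P(n,|I|,|J|,|I \<inter> J|,p) / n^|J - I| \<le> \<Pi> / n^|J - I|. Splitting J into J \<inter> I \<subseteq> I and J - I,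
  of which there are at most n^t of size t, the weights n^-|J - I| sum to at most d 2^|I| + 1, the
  extra 1 accounting for J = I. The failure probability is thus at most \<Pi> d 2^d \<le> \<delta>/d.\<close>

lemma prob_pair_pmf_Times:
  "measure_pmf.prob (pair_pmf P Q) (A \<times> B) = measure_pmf.prob P A * measure_pmf.prob Q B"
proof -
  have "measure_pmf.prob (pair_pmf P Q) (A \<times> B) =
        measure_pmf.prob (pair_pmf P Q) ((A \<times> B) \<inter> set_pmf (pair_pmf P Q))"
    by (rule measure_Int_set_pmf[symmetric])
  also have "(A \<times> B) \<inter> set_pmf (pair_pmf P Q) = (A \<inter> set_pmf P) \<times> (B \<inter> set_pmf Q)"
    by auto
  also have "measure_pmf.prob (pair_pmf P Q) \<dots> =
      measure_pmf.prob P (A \<inter> set_pmf P) * measure_pmf.prob Q (B \<inter> set_pmf Q)"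
    by (intro measure_pmf_prob_product) auto
  finally show ?thesis by (simp add: measure_Int_set_pmf)
qed

lemma Pi_pmf_row:
  assumes "finite N"
  shows "Pi_pmf N dflt (\<lambda>_. Q) = map_pmf (\<lambda>M j. M (i, j)) (Pi_pmf ({i} \<times> N) dflt (\<lambda>_. Q))"
proof -
  have "bij_betw (Pair i) N ({i} \<times> N)" by (auto simp: bij_betw_def inj_on_def)
  from Pi_pmf_bij_betw[OF assms this] show ?thesis by (simp add: o_def)
qed

lemma prob_Pi_pmf_all_rows:
  fixes P :: "'a \<Rightarrow> ('b \<Rightarrow> 'c) \<Rightarrow> bool"
  assumes "finite S" "finite N"
    and local: "\<And>i r r'. (\<And>j. j \<in> N \<Longrightarrow> r j = r' j) \<Longrightarrow> P i r = P i r'"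
  shows "measure_pmf.prob (Pi_pmf (S \<times> N) dflt (\<lambda>_. Q)) {M. \<forall>i\<in>S. P i (\<lambda>j. M (i, j))} =
         (\<Prod>i\<in>S. measure_pmf.prob (Pi_pmf N dflt (\<lambda>_. Q)) {r. P i r})"
  using assms(1)
proof (induction S rule: finite_induct)
  case empty
  then show ?case by simp
next
  case (insert x S)
  define glue :: "('a \<times> 'b \<Rightarrow> 'c) \<times> ('a \<times> 'b \<Rightarrow> 'c) \<Rightarrow> 'a \<times> 'b \<Rightarrow> 'c"
    where "glue = (\<lambda>(f, g) y. if y \<in> {x} \<times> N then f y else g y)"
  have rows: "insert x S \<times> N = {x} \<times> N \<union> S \<times> N" by auto
  have "Pi_pmf (insert x S \<times> N) dflt (\<lambda>_. Q) =
      map_pmf glue (pair_pmf (Pi_pmf ({x} \<times> N) dflt (\<lambda>_. Q)) (Pi_pmf (S \<times> N) dflt (\<lambda>_. Q)))"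
    unfolding rows glue_def using insert.hyps assms(2) by (intro Pi_pmf_union) auto
  moreover have "glue -` {M. \<forall>i\<in>insert x S. P i (\<lambda>j. M (i, j))} =
      {M. P x (\<lambda>j. M (x, j))} \<times> {M. \<forall>i\<in>S. P i (\<lambda>j. M (i, j))}"
  proof -
    have "P x (\<lambda>j. glue (f, g) (x, j)) = P x (\<lambda>j. f (x, j))" for f g
      by (intro local) (auto simp: glue_def)
    moreover have "P i (\<lambda>j. glue (f, g) (i, j)) = P i (\<lambda>j. g (i, j))" if "i \<in> S" for f g i
      using that insert.hyps by (intro local) (auto simp: glue_def)
    ultimately show ?thesis by auto
  qed
  moreover have "measure_pmf.prob (Pi_pmf ({x} \<times> N) dflt (\<lambda>_. Q)) {M. P x (\<lambda>j. M (x, j))} =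
      measure_pmf.prob (Pi_pmf N dflt (\<lambda>_. Q)) {r. P x r}"
    by (simp add: Pi_pmf_row[OF assms(2), of dflt Q x])
  ultimately show ?case using insert by (simp add: prob_pair_pmf_Times)
qed

lemma measure_pmf_prob_agree:
  "measure_pmf.prob P {x. (x \<in> A) = (x \<in> B)} =
     1 - measure_pmf.prob P A - measure_pmf.prob P B + 2 * measure_pmf.prob P (A \<inter> B)"
proof -
  have split: "{x. (x \<in> A) = (x \<in> B)} = (A \<inter> B) \<union> -(A \<union> B)" by auto
  have "measure_pmf.prob P (-(A \<union> B)) = 1 - measure_pmf.prob P (A \<union> B)"
    using measure_pmf.prob_compl[of "A \<union> B" P] by (simp add: Compl_eq_Diff_UNIV)
  moreover have "measure_pmf.prob P (A \<union> B) =
      measure_pmf.prob P A + measure_pmf.prob P B - measure_pmf.prob P (A \<inter> B)"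
    using measure_pmf.finite_measure_Diff'[of B P A] measure_pmf.finite_measure_Union'[of A P B]
    by (simp add: Int_commute)
  ultimately show ?thesis
    unfolding split by (subst measure_pmf.finite_measure_Union) auto
qed

lemma prob_Pi_pmf_bernoulli_not_T_row:
  assumes "finite N" "A \<subseteq> N" "0 \<le> p" "p \<le> 1"
  shows "measure_pmf.prob (Pi_pmf N dflt (\<lambda>_. bernoulli_pmf (1 - p))) {r. \<not> T_row A r} = p ^ card A"
proof -
  have "{r. \<not> T_row A r} = Pi N (\<lambda>j. if j \<in> A then {False} else UNIV)"
    using assms(2) by (auto simp: T_row_def Pi_def)
  then have "measure_pmf.prob (Pi_pmf N dflt (\<lambda>_. bernoulli_pmf (1 - p))) {r. \<not> T_row A r} =
      (\<Prod>j\<in>N. if j \<in> A then p else 1)"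
    using assms by (simp add: measure_Pi_pmf_Pi measure_pmf_single if_distrib cong: if_cong)
  also have "\<dots> = p ^ card A"
    using assms by (simp add: prod.If_cases Int_absorb1)
  finally show ?thesis .
qed

lemma prob_Pi_pmf_bernoulli_T_row_agree:
  assumes "finite N" "I \<subseteq> N" "J \<subseteq> N" "0 \<le> p" "p \<le> 1"
  shows "measure_pmf.prob (Pi_pmf N dflt (\<lambda>_. bernoulli_pmf (1 - p))) {r. T_row J r = T_row I r} =
     1 - p ^ card J - p ^ card I + 2 * p ^ card (I \<union> J)"
proof -
  have agree: "{r. T_row J r = T_row I r} = {r. (r \<in> {r. \<not> T_row J r}) = (r \<in> {r. \<not> T_row I r})}"
    by auto
  have both: "{r. \<not> T_row J r} \<inter> {r. \<not> T_row I r} = {r. \<not> T_row (I \<union> J) r}"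
    by (auto simp: T_row_def)
  show ?thesis
    unfolding agree measure_pmf_prob_agree both
    using assms by (simp add: prob_Pi_pmf_bernoulli_not_T_row)
qed

lemma T_mat_eq_iff:
  "T_mat m J M = T_mat m I M \<longleftrightarrow> (\<forall>i\<in>{1..m}. T_row J (\<lambda>j. M (i, j)) = T_row I (\<lambda>j. M (i, j)))"
  unfolding T_mat_def fun_eq_iff by auto

lemma T_row_cong: "J \<subseteq> N \<Longrightarrow> (\<And>j. j \<in> N \<Longrightarrow> r j = r' j) \<Longrightarrow> T_row J r = T_row J r'"
  unfolding T_row_def by blast

lemma prob_random_matrix_T_mat_eq:
  assumes "I \<subseteq> {1..n}" "J \<subseteq> {1..n}" "0 \<le> p" "p \<le> 1"
  shows "measure_pmf.prob (random_matrix m n p) {M. T_mat m J M = T_mat m I M} =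
     (1 - p ^ card J - p ^ card I + 2 * p ^ card (I \<union> J)) ^ m"
proof -
  have "measure_pmf.prob (random_matrix m n p) {M. T_mat m J M = T_mat m I M} =
      (\<Prod>i\<in>{1..m}. measure_pmf.prob (Pi_pmf {1..n} False (\<lambda>_. bernoulli_pmf (1 - p)))
         {r. T_row J r = T_row I r})"
    unfolding random_matrix_def T_mat_eq_iff
  proof (rule prob_Pi_pmf_all_rows)
    fix i and r r' :: "nat \<Rightarrow> bool"
    assume "\<And>j. j \<in> {1..n} \<Longrightarrow> r j = r' j"
    then show "(T_row J r = T_row I r) = (T_row J r' = T_row I r')"
      using T_row_cong[OF assms(1)] T_row_cong[OF assms(2)] by metis
  qed auto
  then show ?thesis
    using assms by (simp add: prob_Pi_pmf_bernoulli_T_row_agree)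
qed

lemma sum_inverse_power_card_subsets_le:
  assumes "finite C" "card C \<le> n" "n \<ge> 1"
  shows "(\<Sum>B | B \<subseteq> C \<and> card B \<le> s. 1 / real n ^ card B) \<le> real s + 1"
proof -
  let ?subsets = "{B. B \<subseteq> C \<and> card B \<le> s}"
  have "(\<Sum>B\<in>?subsets. 1 / real n ^ card B) =
      (\<Sum>t\<le>s. \<Sum>B\<in>{B \<in> ?subsets. card B = t}. 1 / real n ^ card B)"
    by (rule sum.group[symmetric]) (auto simp: assms(1))
  also have "\<dots> = (\<Sum>t\<le>s. \<Sum>B | B \<subseteq> C \<and> card B = t. 1 / real n ^ t)"
  proof (rule sum.cong[OF refl])
    fix t assume "t \<in> {..s}"
    then have "{B \<in> ?subsets. card B = t} = {B. B \<subseteq> C \<and> card B = t}" by auto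
    then show "(\<Sum>B\<in>{B \<in> ?subsets. card B = t}. 1 / real n ^ card B) =
        (\<Sum>B | B \<subseteq> C \<and> card B = t. 1 / real n ^ t)" by simp
  qed
  also have "\<dots> = (\<Sum>t\<le>s. real (card C choose t) / real n ^ t)"
    by (simp add: n_subsets[OF assms(1)])
  also have "\<dots> \<le> (\<Sum>t\<le>s. 1)"
  proof (rule sum_mono)
    fix t
    have "card C choose t \<le> card C ^ t"
      by (cases "t \<le> card C") (auto intro: binomial_le_pow simp: binomial_eq_0)
    also have "\<dots> \<le> n ^ t"
      using assms(2) by (rule power_mono) simp
    finally have "real (card C choose t) \<le> real n ^ t"
      by (metis of_nat_le_iff of_nat_power)
    then show "real (card C choose t) / real n ^ t \<le> 1"
      using assms(3) by simp
  qed
  finally show ?thesis by simp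
qed

lemma sum_inverse_power_card_Diff_le:
  assumes "finite N" "I \<subseteq> N" "card N \<le> n" "n \<ge> 1" "card I \<le> d"
  shows "(\<Sum>J | J \<subseteq> N \<and> card J \<le> d. 1 / real n ^ card (J - I)) \<le> real d * 2 ^ card I + 1"
proof -
  define C where "C = N - I"
  define S where "S = Sigma (Pow I) (\<lambda>A. {B. B \<subseteq> C \<and> card B \<le> d - card A})"
  have finI: "finite I" and finC: "finite C"
    using assms(1,2) finite_subset by (auto simp: C_def)
  have cardC: "card C \<le> n"
    using assms(1,3) card_mono[of N C] by (auto simp: C_def)
  have "bij_betw (\<lambda>(A, B). A \<union> B) S {J. J \<subseteq> N \<and> card J \<le> d}"
  proof (rule bij_betw_byWitness[where f' = "\<lambda>J. (J \<inter> I, J - I)"])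
    show "(\<lambda>J. (J \<inter> I, J - I)) ` {J. J \<subseteq> N \<and> card J \<le> d} \<subseteq> S"
    proof clarify
      fix J assume J: "J \<subseteq> N" "card J \<le> d"
      have "card (J \<inter> I) + card (J - I) = card J"
        using card_Int_Diff[OF finite_subset[OF J(1) assms(1)], of I] by simp
      then show "(J \<inter> I, J - I) \<in> S" using J by (auto simp: S_def C_def)
    qed
    show "(\<lambda>(A, B). A \<union> B) ` S \<subseteq> {J. J \<subseteq> N \<and> card J \<le> d}"
    proof clarify
      fix A B assume "(A, B) \<in> S"
      then have "A \<subseteq> I" "B \<subseteq> C" "card B \<le> d - card A" by (auto simp: S_def)
      moreover have "card A \<le> d" using card_mono[OF finI \<open>A \<subseteq> I\<close>] assms(5) by linarith
      moreover have "card (A \<union> B) \<le> card A + card B" by (rule card_Un_le)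
      ultimately show "A \<union> B \<subseteq> N \<and> card (A \<union> B) \<le> d"
        using assms(2) by (auto simp: C_def)
    qed
  qed (auto simp: S_def C_def)
  then have "(\<Sum>J | J \<subseteq> N \<and> card J \<le> d. 1 / real n ^ card (J - I)) =
      (\<Sum>(A, B)\<in>S. 1 / real n ^ card (A \<union> B - I))"
    by (subst sum.reindex_bij_betw[symmetric]) (auto simp: case_prod_unfold)
  also have "\<dots> = (\<Sum>A\<in>Pow I. \<Sum>B | B \<subseteq> C \<and> card B \<le> d - card A. 1 / real n ^ card B)"
  proof -
    have "A \<union> B - I = B" if "(A, B) \<in> S" for A B
      using that by (auto simp: S_def C_def)
    then have "(\<Sum>(A, B)\<in>S. 1 / real n ^ card (A \<union> B - I)) = (\<Sum>(A, B)\<in>S. 1 / real n ^ card B)"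
      by (intro sum.cong) auto
    then show ?thesis
      unfolding S_def using finI finC by (simp add: sum.Sigma)
  qed
  also have "\<dots> \<le> (\<Sum>A\<in>Pow I. real (d - card A) + 1)"
    using finC cardC assms(4) by (intro sum_mono sum_inverse_power_card_subsets_le)
  also have "\<dots> \<le> (\<Sum>A\<in>Pow I. real d + (if A = {} then 1 else 0))"
  proof (rule sum_mono)
    fix A assume "A \<in> Pow I"
    then have "finite A" "card A \<le> d"
      using finI assms(5) card_mono[OF finI, of A] finite_subset by auto
    then show "real (d - card A) + 1 \<le> real d + (if A = {} then 1 else 0)"
      by (cases "A = {}") (auto simp: Suc_le_eq card_gt_0_iff)
  qed
  also have "\<dots> = real d * 2 ^ card I + 1"
    using finI by (simp add: sum.distrib card_Pow)
  finally show ?thesis .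
qed

lemma finite_triples: "finite (triples d)"
proof (rule finite_subset)
  show "triples d \<subseteq> {..d} \<times> {..d} \<times> {..d}" by (auto simp: triples_def)
qed auto

lemma Pfun_le_PiMax: "(d1, d2, k) \<in> triples d \<Longrightarrow> Pfun m n d1 d2 k p \<le> PiMax m n d p"
  unfolding PiMax_def
  by (rule Max_ge) (auto simp: finite_triples intro!: image_eqI[where x = "(d1, d2, k)"])

lemma PiMax_nonneg:
  assumes "d \<ge> 1" "p \<ge> 0"
  shows "PiMax m n d p \<ge> 0"
proof -
  have "(1, 0, 0) \<in> triples d" using assms(1) by (auto simp: triples_def)
  then have "Pfun m n 1 0 0 p \<le> PiMax m n d p" by (rule Pfun_le_PiMax)
  moreover have "Pfun m n 1 0 0 p = p ^ m" by (simp add: Pfun_def)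
  ultimately show ?thesis using assms(2) by (metis order.trans zero_le_power)
qed

lemma card_triple_in_triples:
  assumes "finite I" "finite J" "I \<noteq> J" "card I \<le> d" "card J \<le> d"
  shows "(card I, card J, card (I \<inter> J)) \<in> triples d"
proof -
  have "card (I \<inter> J) \<le> card I" "card (I \<inter> J) \<le> card J"
    using assms(1,2) by (auto intro: card_mono)
  moreover have "\<not> (card I = card J \<and> card J = card (I \<inter> J))"
  proof
    assume "card I = card J \<and> card J = card (I \<inter> J)"
    then have "I \<inter> J = I" "I \<inter> J = J"
      using assms(1,2) by (metis Int_lower1 Int_lower2 card_subset_eq)+
    then show False using assms(3) by blast
  qed
  ultimately show ?thesis using assms(4,5) by (auto simp: triples_def)
qed

lemma Pfun_card_triple:
  assumes "finite I" "finite J"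
  shows "Pfun m n (card I) (card J) (card (I \<inter> J)) p =
     real n ^ card (J - I) * (1 - p ^ card J - p ^ card I + 2 * p ^ card (I \<union> J)) ^ m"
proof -
  have "card J - card (I \<inter> J) = card (J - I)"
    using assms card_Diff_subset_Int[of J I] by (simp add: Int_commute)
  moreover have "card I + card J - card (I \<inter> J) = card (I \<union> J)"
    using card_Un_Int[OF assms] by simp
  ultimately show ?thesis by (simp add: Pfun_def)
qed

lemma prob_T_mat_eq_le_PiMax:
  assumes "n \<ge> 1" "0 \<le> p" "p \<le> 1"
    and "I \<subseteq> {1..n}" "card I \<le> d" "J \<subseteq> {1..n}" "card J \<le> d" "J \<noteq> I"
  shows "measure_pmf.prob (random_matrix m n p) {M. T_mat m J M = T_mat m I M} \<le>
     PiMax m n d p / real n ^ card (J - I)"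
proof -
  have fin: "finite I" "finite J" using assms(4,6) finite_subset by auto
  have "real n ^ card (J - I) *
      measure_pmf.prob (random_matrix m n p) {M. T_mat m J M = T_mat m I M} =
      Pfun m n (card I) (card J) (card (I \<inter> J)) p"
    using assms by (simp add: prob_random_matrix_T_mat_eq Pfun_card_triple[OF fin])
  also have "\<dots> \<le> PiMax m n d p"
    using fin assms by (intro Pfun_le_PiMax card_triple_in_triples) auto
  finally show ?thesis
    using assms(1) by (simp add: field_simps mult.commute)
qed

lemma prob_not_separable_le:
  assumes "n \<ge> 1" "0 \<le> p" "p \<le> 1" "I \<subseteq> {1..n}" "card I \<le> d"
  shows "1 - measure_pmf.prob (random_matrix m n p) {M. separable m n M I d} \<le>
     PiMax m n d p * (\<Sum>J\<in>{J. J \<subseteq> {1..n} \<and> card J \<le> d} - {I}. 1 / real n ^ card (J - I))"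
proof -
  let ?R = "random_matrix m n p"
  define F where "F = {J. J \<subseteq> {1..n} \<and> card J \<le> d} - {I}"
  define E where "E J = {M. T_mat m J M = T_mat m I M}" for J
  have "- {M. separable m n M I d} = (\<Union>J\<in>F. E J)"
    by (auto simp: separable_def F_def E_def)
  then have "1 - measure_pmf.prob ?R {M. separable m n M I d} = measure_pmf.prob ?R (\<Union>J\<in>F. E J)"
    using measure_pmf.prob_compl[of "{M. separable m n M I d}" ?R] by (simp add: Compl_eq_Diff_UNIV)
  also have "\<dots> \<le> (\<Sum>J\<in>F. measure_pmf.prob ?R (E J))"
    by (rule measure_pmf.finite_measure_subadditive_finite) (auto simp: F_def)
  also have "\<dots> \<le> PiMax m n d p * (\<Sum>J\<in>F. 1 / real n ^ card (J - I))"
    unfolding sum_distrib_left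
  proof (rule sum_mono)
    fix J assume "J \<in> F"
    then have "J \<subseteq> {1..n}" "card J \<le> d" "J \<noteq> I" by (auto simp: F_def)
    then show "measure_pmf.prob ?R (E J) \<le> PiMax m n d p * (1 / real n ^ card (J - I))"
      using prob_T_mat_eq_le_PiMax[of n p I d J m] assms unfolding E_def by simp
  qed
  finally show ?thesis unfolding F_def .
qed

theorem lemma1:
  fixes n d m :: nat and p \<delta> :: real and I :: "nat set"
  assumes "n \<ge> 1" "d \<ge> 1" "m \<ge> 1"
    and "0 < p" "p < 1" "0 < \<delta>" "\<delta> < 1"
    and "I \<subseteq> {1..n}" "card I \<le> d"
    and "PiMax m n d p \<le> \<delta> / (real d ^ 2 * 2 ^ d)"
  shows "measure_pmf.prob (random_matrix m n p) {M. separable m n M I d} \<ge> 1 - \<delta>"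
proof -
  let ?w = "\<lambda>J. 1 / real n ^ card (J - I)"
  have "(\<Sum>J\<in>{J. J \<subseteq> {1..n} \<and> card J \<le> d} - {I}. ?w J) + 1 \<le> real d * 2 ^ card I + 1"
    using sum_inverse_power_card_Diff_le[of "{1..n}" I n d] assms
    by (simp add: sum_diff1 finite_subset[of _ "Pow {1..n}"])
  also have "\<dots> \<le> real d * 2 ^ d + 1"
    using assms(9) by (simp add: mult_left_mono power_increasing)
  finally have weights: "(\<Sum>J\<in>{J. J \<subseteq> {1..n} \<and> card J \<le> d} - {I}. ?w J) \<le> real d * 2 ^ d"
    by simp
  have "1 - measure_pmf.prob (random_matrix m n p) {M. separable m n M I d} \<le>
      PiMax m n d p * (real d * 2 ^ d)"
    using prob_not_separable_le[of n p I d m] assms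
      mult_left_mono[OF weights PiMax_nonneg[of d p m n]] by simp
  also have "\<dots> \<le> \<delta> / real d"
    using mult_right_mono[OF assms(10), of "real d * 2 ^ d"] assms(2)
    by (simp add: power2_eq_square)
  also have "\<dots> \<le> \<delta>"
    using assms(2,6) by (simp add: divide_le_eq)
  finally show ?thesis by simp
qed

end
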